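(* Fix $r\ge5$. For every integer $k\ge0$, the number $t(k)$ of (labelled) $k$-TWGs for a given edge $e$ with vertex set equal to a given set of size $(r-2)k+2$ containing the endpoints of $e$ satisfies \[ t(k)=\frac{((r-2)k)!}{(r-2)!^{k}}\,\mathrm{FC}_{\binom r2-2}(k), \] where $\mathrm{FC}_d(k)=\frac{1}{dk+1}\binom{(d+1)k}{k}$ is the Fuss--Catalan number.
   Context: Tree witness graphs (TWGs) are defined recursively: a graph $T$ is a TWG for the edge $e$ if either $T=e$ (the single edge with its two endpoints), or there is a copy $H$ of $K_r$ with $e\in E(H)$ and, for each $f\in E(H)\setminus\{e\}$, a TWG $T_f$ for $f$, such that $T_f$ and $T_{f'}$ are vertex disjoint outside $V(H)$ for all $f\ne f'$, and $T=\bigcup_{f\in E(H)\setminus\{e\}}T_f$ ($H$ is called the root and the $T_f$ the primal branches). The order $\vartheta(T)$ is $0$ if $T$ is a single edge and otherwise $1+\sum_f\vartheta(T_f)$; a $k$-TWG is a TWG of order $k$. *)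

theory Defs
  imports Complex_Main
begin

text \<open>Graphs are represented by their edge sets (edges are 2-element vertex sets);
  the vertex set of a TWG is the union of its edges (a TWG has no isolated vertices).\<close>

definition clique_edges :: "'a set \<Rightarrow> 'a set set" where
  "clique_edges H = {f. f \<subseteq> H \<and> card f = 2}"

inductive twg :: "nat \<Rightarrow> 'a set \<Rightarrow> 'a set set \<Rightarrow> nat \<Rightarrow> bool" for r :: nat where
  base: "card e = 2 \<Longrightarrow> twg r e {e} 0"
| step: "\<lbrakk> finite H; card H = r; e \<in> clique_edges H;
           \<forall>f \<in> clique_edges H - {e}. twg r f (Tb f) (kb f);
           \<forall>f \<in> clique_edges H - {e}. \<forall>f' \<in> clique_edges H - {e}.
              f \<noteq> f' \<longrightarrow> \<Union>(Tb f) \<inter> \<Union>(Tb f') \<subseteq> H \<rbrakk>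
         \<Longrightarrow> twg r e (\<Union>f \<in> clique_edges H - {e}. Tb f)
                    (1 + (\<Sum>f \<in> clique_edges H - {e}. kb f))"

definition fuss_catalan :: "nat \<Rightarrow> nat \<Rightarrow> real" where
  "fuss_catalan d k = (1 / real (d * k + 1)) * real (((d + 1) * k) choose k)"

end

theory Submission
  imports Defs
begin

fun raney :: "nat \<Rightarrow> nat \<Rightarrow> nat \<Rightarrow> nat" where
  "raney m 0 n = (if n = 0 then 1 else 0)"
| "raney m (Suc p) 0 = 1"
| "raney m (Suc p) (Suc n) = raney m p (Suc n) + raney m (p + m) n"

lemma raney_0_right [simp]: "raney m p 0 = 1"
  by (cases p) auto

lemma raney_add: "raney m (p + q) n = (\<Sum>i\<le>n. raney m p i * raney m q (n - i))"
proof (induction n arbitrary: p q rule: less_induct)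
  case (less n)
  show ?case
  proof (induction p)
    case 0
    have "(\<Sum>i\<le>n. raney m 0 i * raney m q (n - i)) = (\<Sum>i\<le>n. if i = 0 then raney m q (n - i) else 0)"
      by (intro sum.cong) auto
    then show ?case by simp
  next
    case (Suc p)
    show ?case
    proof (cases n)
      case 0
      then show ?thesis by simp
    next
      case (Suc n')
      have IH: "raney m (p + m + q) n' = (\<Sum>i\<le>n'. raney m (p + m) i * raney m q (n' - i))"
        using less.IH[of n' "p + m" q] Suc by simp
      have "raney m (Suc p + q) n = raney m (p + q) (Suc n') + raney m (p + q + m) n'"
        using Suc by simp
      also have "\<dots> = (\<Sum>i\<le>Suc n'. raney m p i * raney m q (Suc n' - i))
                    + (\<Sum>i\<le>n'. raney m (p + m) i * raney m q (n' - i))"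
        using Suc.IH \<open>n = Suc n'\<close> IH by (simp add: ac_simps)
      also have "\<dots> = raney m q (Suc n') + (\<Sum>i\<le>n'. raney m p (Suc i) * raney m q (n' - i))
                    + (\<Sum>i\<le>n'. raney m (p + m) i * raney m q (n' - i))"
        by (subst sum.atMost_Suc_shift) simp
      also have "\<dots> = raney m q (Suc n') + (\<Sum>i\<le>n'. raney m (Suc p) (Suc i) * raney m q (n' - i))"
        by (simp add: sum.distrib[symmetric] algebra_simps)
      also have "\<dots> = (\<Sum>i\<le>Suc n'. raney m (Suc p) i * raney m q (Suc n' - i))"
        by (simp only: sum.atMost_Suc_shift) simp
      finally show ?thesis using Suc by simp
    qed
  qed
qed

lemma raney_closed_form:
  assumes "m \<ge> 1"
  shows "raney m p n * (m * n + p) = p * ((m * n + p) choose n)"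
proof (induction n arbitrary: p rule: less_induct)
  case (less n)
  show ?case
  proof (cases n)
    case 0
    then show ?thesis by simp
  next
    case (Suc n')
    show ?thesis
    proof (induction p)
      case 0
      then show ?case using Suc by simp
    next
      case (Suc p)
      define N where "N = m * n + p"
      have "n \<le> m * n" using assms by simp
      then have N_pos: "N \<ge> n" "n \<ge> 1"
        using \<open>n = Suc n'\<close> by (auto simp: N_def)
      have IH1: "raney m p n * N = p * (N choose n)"
        using Suc.IH by (simp add: N_def)
      have IH2: "raney m (p + m) n' * N = (p + m) * (N choose n')"
        using less.IH[of n' "p + m"] \<open>n = Suc n'\<close> by (simp add: N_def algebra_simps)
      have pascal: "(Suc N choose n) = (N choose n) + (N choose n')"
        using binomial_Suc_Suc[of N n'] \<open>n = Suc n'\<close> by simp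
      have absorb: "n * (N choose n) + n * (N choose n') = (N + 1) * (N choose n')"
        using Suc_times_binomial[of n' N] pascal \<open>n = Suc n'\<close> by (simp add: algebra_simps)
      have rec: "raney m (Suc p) n * N = p * (N choose n) + (p + m) * (N choose n')"
        using IH1 IH2 \<open>n = Suc n'\<close> by (simp add: algebra_simps)
      have "N * n * (raney m (Suc p) n * (N + 1)) = N * n * ((p + 1) * (Suc N choose n))"
        unfolding pascal using rec absorb N_def by algebra
      then have "raney m (Suc p) n * (N + 1) = (p + 1) * (Suc N choose n)"
        using N_pos by simp
      then show ?case by (simp add: N_def)
    qed
  qed
qed

lemma raney_1_eq_fuss_catalan:
  assumes "m \<ge> 1"
  shows "real (raney m 1 k) = fuss_catalan (m - 1) k"
proof -
  have "k \<le> m * k"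
    using assms by simp
  then have M: "m * k + 1 - k = (m - 1) * k + 1"
    by (simp add: diff_mult_distrib Suc_diff_le)
  have closed: "raney m 1 k * (m * k + 1) = (m * k + 1) choose k"
    using raney_closed_form[OF assms, of 1 k] by simp
  have "(m * k + 1) * (raney m 1 k * (m * k + 1 - k)) = (m * k + 1 - k) * ((m * k + 1) choose k)"
    unfolding closed[symmetric] by (simp only: ac_simps)
  also have "\<dots> = (m * k + 1) * ((m * k) choose k)"
    using binomial_absorb_comp[of "m * k + 1" k] by simp
  finally have "(m * k + 1) * (raney m 1 k * ((m - 1) * k + 1)) = (m * k + 1) * ((m * k) choose k)"
    unfolding M .
  then have "raney m 1 k * ((m - 1) * k + 1) = (m * k) choose k"
    by (rule mult_left_cancel[THEN iffD1, rotated]) simp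
  then have "real (raney m 1 k) * real ((m - 1) * k + 1) = real ((m * k) choose k)"
    by (metis of_nat_mult)
  then have "real (raney m 1 k) = real ((m * k) choose k) / real ((m - 1) * k + 1)"
    by (rule eq_divide_imp[rotated]) (simp only: of_nat_eq_0_iff add_is_0 one_neq_zero simp_thms)
  moreover have "(m - 1 + 1) * k = m * k"
    using assms by simp
  ultimately show ?thesis
    unfolding fuss_catalan_def by simp
qed

lemma card_2_subset_eq: "card g = 2 \<Longrightarrow> card f = 2 \<Longrightarrow> g \<subseteq> f \<Longrightarrow> g = f"
  by (metis card.infinite card_subset_eq zero_neq_numeral)

lemma disjoint_family_avoids:
  assumes "finite P" "card P < card Y"
    and disjoint: "\<And>y y'. y \<in> Y \<Longrightarrow> y' \<in> Y \<Longrightarrow> y \<noteq> y' \<Longrightarrow> R y \<inter> R y' = {}"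
  shows "\<exists>y\<in>Y. R y \<inter> P = {}"
proof (rule ccontr)
  assume "\<not> ?thesis"
  then have "\<forall>y\<in>Y. \<exists>p. p \<in> R y \<inter> P"
    by blast
  then obtain pick where pick: "\<And>y. y \<in> Y \<Longrightarrow> pick y \<in> R y \<inter> P"
    by metis
  have "inj_on pick Y"
  proof (rule inj_onI)
    fix y y' assume y: "y \<in> Y" "y' \<in> Y" "pick y = pick y'"
    show "y = y'"
    proof (rule ccontr)
      assume "y \<noteq> y'"
      then have "R y \<inter> R y' = {}"
        using disjoint y(1,2) by blast
      then show False
        using pick[OF y(1)] pick[OF y(2)] y(3) by auto
    qed
  qed
  then have "card Y \<le> card P"
    using card_inj_on_le[of pick Y P] pick assms(1) by blast
  with assms(2) show False
    by simp
qed

lemma card_fun_upd_image: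
  assumes "finite A" "finite F" "\<And>h. h \<in> F \<Longrightarrow> h x = c"
  shows "card ((\<lambda>(a, h). h(x := a)) ` (A \<times> F)) = card A * card F"
proof -
  have "inj_on (\<lambda>(a, h). h(x := a)) (A \<times> F)"
  proof (rule inj_onI, clarify)
    fix a h a' h' assume "h \<in> F" "h' \<in> F" "h(x := a) = h'(x := a')"
    then show "a = a' \<and> h = h'"
      using assms(3) by (metis fun_upd_idem_iff fun_upd_same fun_upd_upd)
  qed
  then show ?thesis
    by (simp add: card_image card_cartesian_product)
qed

lemma card_subsets_times_fact:
  assumes "finite W" "card W = s * n" "j \<le> n"
  shows "card {S. S \<subseteq> W \<and> card S = s * j} * fact (s * j) * fact (s * (n - j)) = (fact (s * n) :: nat)"
proof -
  have "s * j \<le> s * n" "s * (n - j) = s * n - s * j"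
    using assms(3) by (simp_all add: diff_mult_distrib2)
  then show ?thesis
    using n_subsets[OF assms(1)] assms(2) binomial_fact_lemma[of "s * j" "s * n"]
    by (simp add: ac_simps)
qed

lemma card_supersets:
  assumes "finite V" "e \<subseteq> V"
  shows "card {H. e \<subseteq> H \<and> H \<subseteq> V \<and> card H = card e + s} = (card V - card e) choose s"
proof -
  let ?Hs = "{H. e \<subseteq> H \<and> H \<subseteq> V \<and> card H = card e + s}"
  have fin: "finite e" "finite (V - e)"
    using assms finite_subset by blast+
  have "bij_betw (\<lambda>H. H - e) ?Hs {S. S \<subseteq> V - e \<and> card S = s}"
  proof (rule bij_betw_byWitness[where f' = "\<lambda>S. S \<union> e"])
    show "\<forall>H\<in>?Hs. H - e \<union> e = H" "\<forall>S\<in>{S. S \<subseteq> V - e \<and> card S = s}. S \<union> e - e = S"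
      by auto
    show "(\<lambda>H. H - e) ` ?Hs \<subseteq> {S. S \<subseteq> V - e \<and> card S = s}"
      using fin assms(1) by (auto simp: card_Diff_subset finite_subset)
    have "card (S \<union> e) = card e + card S" if "S \<subseteq> V - e" for S
    proof -
      have "S \<inter> e = {}"
        using that by blast
      then show ?thesis
        using card_Un_disjoint[OF finite_subset[OF that fin(2)] fin(1)] by simp
    qed
    then show "(\<lambda>S. S \<union> e) ` {S. S \<subseteq> V - e \<and> card S = s} \<subseteq> ?Hs"
      using assms(2) by auto
  qed
  then show ?thesis
    using n_subsets[OF fin(2), of s] card_Diff_subset[OF fin(1) assms(2)] by (simp add: bij_betw_same_card)
qed

lemma clique_edges_iff: "f \<in> clique_edges H \<longleftrightarrow> f \<subseteq> H \<and> card f = 2"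
  by (simp add: clique_edges_def)

lemma doubleton_in_clique_edges: "a \<in> H \<Longrightarrow> b \<in> H \<Longrightarrow> a \<noteq> b \<Longrightarrow> {a, b} \<in> clique_edges H"
  by (simp add: clique_edges_iff)

lemma finite_clique_edges: "finite H \<Longrightarrow> finite (clique_edges H)"
  unfolding clique_edges_def by (rule finite_subset[of _ "Pow H"]) auto

lemma card_clique_edges: "finite H \<Longrightarrow> card (clique_edges H) = card H choose 2"
  unfolding clique_edges_def by (simp add: n_subsets)

lemma clique_edges_cover:
  assumes "finite H" "card H \<ge> 3" "e \<in> clique_edges H" "x \<in> H"
  shows "\<exists>f \<in> clique_edges H - {e}. x \<in> f"
proof -
  obtain u w where e: "e = {u, w}" "u \<noteq> w"
    using assms(3) by (auto simp: clique_edges_iff card_2_iff)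
  have "card (H - e) \<ge> 1"
    using assms e by (simp add: card_Diff_subset clique_edges_iff)
  then obtain y where y: "y \<in> H" "y \<notin> e"
    by (metis Diff_iff card_0_eq not_one_le_zero ex_in_conv assms(1) finite_Diff)
  show ?thesis
  proof (cases "x \<in> e")
    case True
    with y have "x \<noteq> y" by blast
    then show ?thesis
      using y assms(4) True by (intro bexI[of _ "{x, y}"]) (auto simp: clique_edges_iff)
  next
    case False
    then have "x \<noteq> u" "u \<in> H"
      using e assms(3) by (auto simp: clique_edges_iff)
    then show ?thesis
      using assms(4) False e by (intro bexI[of _ "{x, u}"]) (auto simp: clique_edges_iff)
  qed
qed

lemma clique_subset_branches:
  assumes "finite H" "card H \<ge> 3" "e \<in> clique_edges H"
    and "\<And>f. f \<in> clique_edges H - {e} \<Longrightarrow> f \<subseteq> \<Union>(Tb f)"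
  shows "H \<subseteq> \<Union>(\<Union>f\<in>clique_edges H - {e}. Tb f)"
proof
  fix x assume "x \<in> H"
  then obtain f where "f \<in> clique_edges H - {e}" "x \<in> f"
    using clique_edges_cover[OF assms(1-3)] by blast
  then show "x \<in> \<Union>(\<Union>f\<in>clique_edges H - {e}. Tb f)"
    using assms(4) by blast
qed

lemma twg_order_0: "twg r e T 0 \<Longrightarrow> T = {e}"
  by (cases rule: twg.cases) auto

lemma twg_card_edge: "twg r e T k \<Longrightarrow> card e = 2"
  by (cases rule: twg.cases) (auto simp: clique_edges_iff)

lemma twg_edges: "twg r e T k \<Longrightarrow> finite T \<and> (\<forall>h\<in>T. card h = 2)"
  by (induction rule: twg.induct) (simp_all add: finite_clique_edges)

lemma twg_finite_vertices:
  assumes "twg r e T k"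
  shows "finite (\<Union>T)"
proof (rule finite_Union)
  show "finite T"
    using twg_edges[OF assms] by blast
  fix h assume "h \<in> T"
  then have "card h = 2"
    using twg_edges[OF assms] by blast
  then show "finite h"
    by (intro card_ge_0_finite) simp
qed

lemma twg_edge_subset: "twg r e T k \<Longrightarrow> 3 \<le> r \<Longrightarrow> e \<subseteq> \<Union>T"
proof (induction rule: twg.induct)
  case (step H e Tb kb)
  then have "H \<subseteq> \<Union>(\<Union>f\<in>clique_edges H - {e}. Tb f)"
    by (intro clique_subset_branches) auto
  then show ?case
    using step.hyps(3) by (auto simp: clique_edges_iff)
qed auto

lemma twg_card_vertices_le: "twg r e T k \<Longrightarrow> 3 \<le> r \<Longrightarrow> card (\<Union>T) \<le> (r - 2) * k + 2"
proof (induction rule: twg.induct)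
  case (base e)
  then show ?case by simp
next
  case (step H e Tb kb)
  let ?I = "clique_edges H - {e}"
  let ?new = "\<lambda>f. \<Union>(Tb f) - f"
  have branch: "twg r f (Tb f) (kb f)" "card (\<Union>(Tb f)) \<le> (r - 2) * kb f + 2" if "f \<in> ?I" for f
    using step.IH that \<open>3 \<le> r\<close> by auto
  have fin: "finite ?I" "\<And>f. f \<in> ?I \<Longrightarrow> finite (?new f)"
    using step.hyps(1) twg_finite_vertices[OF branch(1)] by (simp_all add: finite_clique_edges)
  have new: "card (?new f) \<le> (r - 2) * kb f" if "f \<in> ?I" for f
  proof -
    have "f \<subseteq> \<Union>(Tb f)" "card f = 2"
      using twg_edge_subset[OF branch(1)] twg_card_edge[OF branch(1)] that \<open>3 \<le> r\<close> by auto
    moreover from this have "finite f"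
      by (intro card_ge_0_finite) simp
    ultimately have "card (?new f) = card (\<Union>(Tb f)) - 2"
      by (simp add: card_Diff_subset)
    then show ?thesis
      using branch(2)[OF that] by linarith
  qed
  have "\<Union>(\<Union>f\<in>?I. Tb f) \<subseteq> H \<union> (\<Union>f\<in>?I. ?new f)"
  proof
    fix x assume "x \<in> \<Union>(\<Union>f\<in>?I. Tb f)"
    then obtain f where "f \<in> ?I" "x \<in> \<Union>(Tb f)" by blast
    moreover from this have "f \<subseteq> H" by (simp add: clique_edges_iff)
    ultimately show "x \<in> H \<union> (\<Union>f\<in>?I. ?new f)" by blast
  qed
  then have "card (\<Union>(\<Union>f\<in>?I. Tb f)) \<le> card (H \<union> (\<Union>f\<in>?I. ?new f))"
    using fin step.hyps(1) by (simp add: card_mono)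
  also have "\<dots> \<le> card H + card (\<Union>f\<in>?I. ?new f)"
    by (rule card_Un_le)
  also have "\<dots> \<le> r + (\<Sum>f\<in>?I. card (?new f))"
    using step.hyps(2) card_UN_le[OF fin(1)] by simp
  also have "\<dots> \<le> r + (\<Sum>f\<in>?I. (r - 2) * kb f)"
    using new sum_mono[of ?I "\<lambda>f. card (?new f)" "\<lambda>f. (r - 2) * kb f"] by simp
  also have "\<dots> = (r - 2) * (1 + sum kb ?I) + 2"
    using \<open>3 \<le> r\<close> by (simp add: sum_distrib_left[symmetric] distrib_left)
  finally show ?case .
qed

definition tight_twg :: "nat \<Rightarrow> 'a set \<Rightarrow> 'a set set \<Rightarrow> nat \<Rightarrow> bool" where
  "tight_twg r e T k \<longleftrightarrow> twg r e T k \<and> card (\<Union>T) = (r - 2) * k + 2"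

lemma tight_twg_trivial:
  assumes "tight_twg r g T j" "3 \<le> r" "\<Union>T = g"
  shows "T = {g}"
proof -
  have "card g = 2"
    using assms(1) twg_card_edge unfolding tight_twg_def by blast
  then have "j = 0"
    using assms unfolding tight_twg_def by simp
  then show ?thesis
    using assms(1) twg_order_0 unfolding tight_twg_def by blast
qed

text \<open>The vertices of a TWG built on the root H are H together with the private vertices of the
  branches, which are disjoint; so the vertex bound is attained only if it is attained by every
  branch and no branch uses a vertex of H outside its own edge.\<close>

lemma tight_twg_branches:
  assumes "3 \<le> r" "finite H" "card H = r" "e \<in> clique_edges H"
    and branch: "\<And>f. f \<in> clique_edges H - {e} \<Longrightarrow> twg r f (Tb f) (kb f)"
    and disjoint: "\<And>f f'. f \<in> clique_edges H - {e} \<Longrightarrow> f' \<in> clique_edges H - {e} \<Longrightarrow> f \<noteq> f'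
      \<Longrightarrow> \<Union>(Tb f) \<inter> \<Union>(Tb f') \<subseteq> H"
    and tight: "card (\<Union>(\<Union>f\<in>clique_edges H - {e}. Tb f)) = (r - 2) * (1 + sum kb (clique_edges H - {e})) + 2"
    and f: "f \<in> clique_edges H - {e}"
  shows "tight_twg r f (Tb f) (kb f)" "\<Union>(Tb f) \<inter> H = f"
proof -
  let ?I = "clique_edges H - {e}"
  let ?new = "\<lambda>f. \<Union>(Tb f) - H"
  have fin: "finite ?I" "\<And>f. f \<in> ?I \<Longrightarrow> finite (\<Union>(Tb f))"
    using assms(2) twg_finite_vertices[OF branch] by (simp_all add: finite_clique_edges)
  have edge: "f \<subseteq> \<Union>(Tb f)" "f \<subseteq> H" "card f = 2" "finite f" if "f \<in> ?I" for f
    using twg_edge_subset[OF branch[OF that] assms(1)] that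
    by (auto simp: clique_edges_iff intro: card_ge_0_finite)
  have bound: "card (?new f) \<le> (r - 2) * kb f" "card (\<Union>(Tb f) - f) = card (\<Union>(Tb f)) - 2"
    if "f \<in> ?I" for f
  proof -
    show "card (\<Union>(Tb f) - f) = card (\<Union>(Tb f)) - 2"
      using edge[OF that] by (simp add: card_Diff_subset)
    moreover have "card (?new f) \<le> card (\<Union>(Tb f) - f)"
      using fin(2)[OF that] edge[OF that] by (intro card_mono) auto
    ultimately show "card (?new f) \<le> (r - 2) * kb f"
      using twg_card_vertices_le[OF branch[OF that] assms(1)] by linarith
  qed
  have "H \<subseteq> \<Union>(\<Union>f\<in>?I. Tb f)"
    using assms(1-4) edge(1) by (intro clique_subset_branches) auto
  then have union: "\<Union>(\<Union>f\<in>?I. Tb f) = H \<union> (\<Union>f\<in>?I. ?new f)"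
    by blast
  have "?new f \<inter> ?new f' = {}" if "f \<in> ?I" "f' \<in> ?I" "f \<noteq> f'" for f f'
    using disjoint[OF that] by blast
  then have "card (\<Union>f\<in>?I. ?new f) = (\<Sum>f\<in>?I. card (?new f))"
    using fin by (intro card_UN_disjoint) auto
  moreover have "card (\<Union>(\<Union>f\<in>?I. Tb f)) = card H + card (\<Union>f\<in>?I. ?new f)"
    unfolding union using fin assms(2) by (intro card_Un_disjoint) auto
  ultimately have "card (\<Union>(\<Union>f\<in>?I. Tb f)) = r + (\<Sum>f\<in>?I. card (?new f))"
    using assms(3) by simp
  with tight have "(\<Sum>f\<in>?I. card (?new f)) = (\<Sum>f\<in>?I. (r - 2) * kb f)"
    using assms(1) by (simp add: sum_distrib_left distrib_left)
  then have new: "card (?new f) = (r - 2) * kb f"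
    using sum_mono_inv[OF _ bound(1) f fin(1)] by simp
  have "card (?new f) \<le> card (\<Union>(Tb f) - f)" "?new f \<subseteq> \<Union>(Tb f) - f"
    using fin(2)[OF f] edge[OF f] by (auto intro: card_mono)
  moreover have "card (\<Union>(Tb f) - f) \<le> (r - 2) * kb f"
    using bound(2)[OF f] twg_card_vertices_le[OF branch[OF f] assms(1)] by linarith
  ultimately have "?new f = \<Union>(Tb f) - f" "card (\<Union>(Tb f)) = (r - 2) * kb f + 2"
    using new card_subset_eq[of "\<Union>(Tb f) - f" "?new f"] fin(2)[OF f] bound(2)[OF f]
      card_mono[OF fin(2)[OF f], of f] edge[OF f] by auto
  then show "tight_twg r f (Tb f) (kb f)" "\<Union>(Tb f) \<inter> H = f"
    using branch[OF f] edge[OF f] unfolding tight_twg_def by blast+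
qed

definition reach :: "'a set set \<Rightarrow> 'a set \<Rightarrow> 'a \<Rightarrow> 'a \<Rightarrow> bool" where
  "reach T X = (\<lambda>x y. {x, y} \<in> T \<and> x \<notin> X \<and> y \<notin> X)\<^sup>*\<^sup>*"

lemma reach_refl: "reach T X a a"
  unfolding reach_def by simp

lemma reach_edge: "reach T X a b \<Longrightarrow> {b, c} \<in> T \<Longrightarrow> b \<notin> X \<Longrightarrow> c \<notin> X \<Longrightarrow> reach T X a c"
  unfolding reach_def by (rule rtranclp.rtrancl_into_rtrancl) auto

lemma reach_trans: "reach T X a b \<Longrightarrow> reach T X b c \<Longrightarrow> reach T X a c"
  unfolding reach_def by (rule rtranclp_trans)

lemma reach_sym: "reach T X a b \<Longrightarrow> reach T X b a"
  unfolding reach_def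
proof (induction rule: rtranclp_induct)
  case (step y z)
  then have "{z, y} \<in> T \<and> z \<notin> X \<and> y \<notin> X"
    by (simp add: insert_commute)
  then show ?case
    using step.IH by (rule converse_rtranclp_into_rtranclp)
qed simp

lemma reach_mono:
  assumes "reach T X a b" "T \<subseteq> T'" "\<And>v. v \<in> \<Union>T \<Longrightarrow> v \<notin> X \<Longrightarrow> v \<notin> X'"
  shows "reach T' X' a b"
  using assms(1) unfolding reach_def
proof (induction rule: rtranclp_induct)
  case (step y z)
  then have "{y, z} \<in> T' \<and> y \<notin> X' \<and> z \<notin> X'"
    using assms(2,3) by blast
  with step.IH show ?case
    by (simp add: rtranclp.rtrancl_into_rtrancl)
qed simp

lemma reach_closed:
  assumes "reach T X a b" "a \<in> C" "\<And>x y. {x, y} \<in> T \<Longrightarrow> x \<in> C \<Longrightarrow> y \<notin> X \<Longrightarrow> y \<in> C"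
  shows "b \<in> C"
  using assms(1) unfolding reach_def
  by (induction rule: rtranclp_induct) (use assms(2,3) in blast)+

lemma reach_notin: "reach T X a b \<Longrightarrow> a \<notin> X \<Longrightarrow> b \<notin> X"
  unfolding reach_def by (induction rule: rtranclp_induct) auto

definition attached :: "'a set \<Rightarrow> 'a set set \<Rightarrow> bool" where
  "attached f T \<longleftrightarrow> (\<forall>x z. x \<in> \<Union>T - f \<longrightarrow> z \<in> f \<longrightarrow> (\<exists>y. reach T f x y \<and> {y, z} \<in> T))"

locale root_decomposition =
  fixes e H :: "'a set" and Tb :: "'a set \<Rightarrow> 'a set set"
  assumes finite_root: "finite H"
    and card_root: "3 \<le> card H"
    and root_edge: "e \<in> clique_edges H"
    and branch_meets_root: "g \<in> clique_edges H - {e} \<Longrightarrow> \<Union>(Tb g) \<inter> H = g"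
    and branch_edges: "g \<in> clique_edges H - {e} \<Longrightarrow> h \<in> Tb g \<Longrightarrow> card h = 2"
    and branch_attached: "g \<in> clique_edges H - {e} \<Longrightarrow> attached g (Tb g)"
    and trivial_branch: "g \<in> clique_edges H - {e} \<Longrightarrow> \<Union>(Tb g) = g \<Longrightarrow> Tb g = {g}"
    and branches_disjoint: "g \<in> clique_edges H - {e} \<Longrightarrow> g' \<in> clique_edges H - {e} \<Longrightarrow> g \<noteq> g'
      \<Longrightarrow> \<Union>(Tb g) \<inter> \<Union>(Tb g') \<subseteq> H"
begin

abbreviation primal_edges :: "'a set set" where
  "primal_edges \<equiv> clique_edges H - {e}"

abbreviation glued :: "'a set set" where
  "glued \<equiv> \<Union>g\<in>primal_edges. Tb g"

lemma root_edge_subset: "e \<subseteq> H" and card_root_edge: "card e = 2"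
  using root_edge by (simp_all add: clique_edges_iff)

lemma primal_edge_subset: "g \<in> primal_edges \<Longrightarrow> g \<subseteq> H"
  and card_primal_edge: "g \<in> primal_edges \<Longrightarrow> card g = 2"
  by (simp_all add: clique_edges_iff)

lemma primal_edge_subset_branch: "g \<in> primal_edges \<Longrightarrow> g \<subseteq> \<Union>(Tb g)"
  using branch_meets_root[of g] by blast

lemma private_vertices: "g \<in> primal_edges \<Longrightarrow> \<Union>(Tb g) - g = \<Union>(Tb g) - H"
  using branch_meets_root[of g] by blast

lemma edge_at_private_vertex:
  assumes "{a, b} \<in> glued" "g \<in> primal_edges" "a \<in> \<Union>(Tb g) - H"
  shows "{a, b} \<in> Tb g"
proof -
  obtain h where h: "h \<in> primal_edges" "{a, b} \<in> Tb h"
    using assms(1) by blast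
  then have "h = g"
    using branches_disjoint[OF h(1) assms(2)] assms(3) by blast
  with h show ?thesis
    by simp
qed

lemma reach_stays_private:
  assumes "reach glued X a b" "g \<in> primal_edges" "g \<subseteq> X" "a \<in> \<Union>(Tb g) - H"
  shows "b \<in> \<Union>(Tb g) - H"
proof (rule reach_closed[OF assms(1) assms(4)])
  fix x y assume xy: "{x, y} \<in> glued" "x \<in> \<Union>(Tb g) - H" "y \<notin> X"
  then have "y \<in> \<Union>(Tb g)"
    using edge_at_private_vertex[OF xy(1) assms(2)] by blast
  then show "y \<in> \<Union>(Tb g) - H"
    using xy(3) assms(3) branch_meets_root[OF assms(2)] by blast
qed

text \<open>A path through the branch of g = {a, z}: either g itself is an edge, or a private vertex
  of the branch is attached to both a and z.\<close>

lemma reach_through_branch: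
  assumes g: "g \<in> primal_edges" "g = {a, z}"
    and P: "a \<notin> P" "(\<Union>(Tb g) - H) \<inter> P = {}"
  shows "\<exists>y. reach glued P a y \<and> {y, z} \<in> glued \<and> y \<notin> P"
proof (cases "\<Union>(Tb g) = g")
  case True
  then have "g \<in> glued"
    using trivial_branch[OF g(1) True] g(1) by blast
  then show ?thesis
    using P(1) reach_refl[of glued P a] g(2) by blast
next
  case False
  then obtain c where c: "c \<in> \<Union>(Tb g) - g"
    using primal_edge_subset_branch[OF g(1)] by blast
  have from_c: "\<exists>y. reach glued P c y \<and> {y, w} \<in> Tb g \<and> y \<notin> P" if w: "w \<in> g" for w
  proof -
    obtain y where y: "reach (Tb g) g c y" "{y, w} \<in> Tb g"
      using branch_attached[OF g(1)] c w unfolding attached_def by blast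
    have outside: "v \<notin> P" if "v \<in> \<Union>(Tb g)" "v \<notin> g" for v
      using that P(2) private_vertices[OF g(1)] by blast
    have "reach glued P c y"
      by (rule reach_mono[OF y(1)]) (use g(1) outside in auto)
    moreover have "y \<notin> g"
      using reach_notin[OF y(1)] c by blast
    then have "y \<notin> P"
      using outside y(2) by blast
    ultimately show ?thesis
      using y(2) by blast
  qed
  have "a \<in> g" "z \<in> g"
    using g(2) by simp_all
  then obtain y1 y2 where y1: "reach glued P c y1" "{y1, a} \<in> Tb g" "y1 \<notin> P"
    and y2: "reach glued P c y2" "{y2, z} \<in> Tb g" "y2 \<notin> P"
    using from_c by meson
  have "{y1, a} \<in> glued"
    using y1(2) g(1) by blast
  then have "{a, y1} \<in> glued"
    by (simp add: insert_commute)
  then have "reach glued P a y1"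
    by (rule reach_edge[OF reach_refl _ P(1) y1(3)])
  then have "reach glued P a y2"
    using reach_trans[OF reach_trans[OF _ reach_sym[OF y1(1)]] y2(1)] by blast
  then show ?thesis
    using y2 g(1) by blast
qed

lemma reach_along_branch:
  assumes "{a, z} \<in> primal_edges" "a \<notin> P" "z \<notin> P" "(\<Union>(Tb {a, z}) - H) \<inter> P = {}"
  shows "reach glued P a z"
proof -
  obtain y where "reach glued P a y" "{y, z} \<in> glued" "y \<notin> P"
    using reach_through_branch[OF assms(1) refl assms(2,4)] by blast
  then show ?thesis
    using reach_edge[of glued P a y z] assms(3) by blast
qed

lemma root_subset_glued: "H \<subseteq> \<Union>glued"
  by (rule clique_subset_branches[OF finite_root card_root root_edge primal_edge_subset_branch])

lemma glued_attached: "attached e glued"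
  unfolding attached_def
proof (intro allI impI)
  fix x z assume x: "x \<in> \<Union>glued - e" and z: "z \<in> e"
  have from_root: "\<exists>y. reach glued e a y \<and> {y, z} \<in> glued" if a: "a \<in> H" "a \<notin> e" for a
  proof -
    have "a \<noteq> z" "z \<in> H"
      using a z root_edge_subset by auto
    then have "{a, z} \<in> primal_edges"
      using a z by (auto intro: doubleton_in_clique_edges)
    moreover have "(\<Union>(Tb {a, z}) - H) \<inter> e = {}"
      using root_edge_subset by blast
    ultimately show ?thesis
      using reach_through_branch[of "{a, z}" a z e] a(2) by blast
  qed
  show "\<exists>y. reach glued e x y \<and> {y, z} \<in> glued"
  proof (cases "x \<in> H")
    case True
    then show ?thesis
      using from_root x by blast
  next
    case False
    obtain g where g: "g \<in> primal_edges" "x \<in> \<Union>(Tb g)"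
      using x by blast
    then have x_private: "x \<in> \<Union>(Tb g) - g"
      using False primal_edge_subset[OF g(1)] by blast
    have "\<not> g \<subseteq> e"
      using card_2_subset_eq[OF card_primal_edge[OF g(1)] card_root_edge] g(1) by blast
    then obtain a where a: "a \<in> g" "a \<notin> e"
      by blast
    obtain y where y: "reach (Tb g) g x y" "{y, a} \<in> Tb g"
      using branch_attached[OF g(1)] x_private a(1) unfolding attached_def by blast
    have outside: "v \<notin> e" if "v \<in> \<Union>(Tb g)" "v \<notin> g" for v
      using that branch_meets_root[OF g(1)] root_edge_subset by blast
    have "reach glued e x y"
      by (rule reach_mono[OF y(1)]) (use g(1) outside in auto)
    moreover have "y \<notin> g"
      using reach_notin[OF y(1)] x_private by blast
    then have "y \<notin> e"
      using outside y(2) by blast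
    moreover have "{y, a} \<in> glued"
      using y(2) g(1) by blast
    ultimately have "reach glued e x a"
      using reach_edge[of glued e x y a] a(2) by blast
    moreover obtain y' where "reach glued e a y'" "{y', z} \<in> glued"
      using from_root a primal_edge_subset[OF g(1)] by blast
    ultimately show ?thesis
      using reach_trans[of glued e x a y'] by blast
  qed
qed

end

lemma tight_step_root_decomposition:
  assumes r: "3 \<le> r" and H: "finite H" "card H = r" "e \<in> clique_edges H"
    and branch: "\<And>f. f \<in> clique_edges H - {e} \<Longrightarrow> twg r f (Tb f) (kb f)"
    and attached: "\<And>f. f \<in> clique_edges H - {e} \<Longrightarrow> tight_twg r f (Tb f) (kb f) \<Longrightarrow> attached f (Tb f)"
    and disjoint: "\<And>f f'. f \<in> clique_edges H - {e} \<Longrightarrow> f' \<in> clique_edges H - {e} \<Longrightarrow> f \<noteq> f'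
      \<Longrightarrow> \<Union>(Tb f) \<inter> \<Union>(Tb f') \<subseteq> H"
    and tight: "card (\<Union>(\<Union>f\<in>clique_edges H - {e}. Tb f)) = (r - 2) * (1 + sum kb (clique_edges H - {e})) + 2"
  shows "root_decomposition e H Tb"
proof
  fix g assume g: "g \<in> clique_edges H - {e}"
  note tight_branch = tight_twg_branches[OF r H branch disjoint tight g]
  show "\<Union>(Tb g) \<inter> H = g"
    by (rule tight_branch(2))
  show "attached g (Tb g)"
    using attached[OF g tight_branch(1)] .
  show "\<Union>(Tb g) = g \<Longrightarrow> Tb g = {g}"
    using tight_twg_trivial[OF tight_branch(1) r] .
  show "card h = 2" if "h \<in> Tb g" for h
    using twg_edges[OF branch[OF g]] that by blast
qed (use H r disjoint in auto)

lemma tight_twg_attached: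
  assumes "tight_twg r f T j" "3 \<le> r"
  shows "attached f T"
proof -
  have "twg r f T j \<Longrightarrow> card (\<Union>T) = (r - 2) * j + 2 \<Longrightarrow> attached f T"
  proof (induction rule: twg.induct)
    case (base e)
    then show ?case
      unfolding attached_def by auto
  next
    case (step H e Tb kb)
    have "root_decomposition e H Tb"
    proof (rule tight_step_root_decomposition[OF assms(2) step.hyps(1-3)])
      show "twg r f (Tb f) (kb f)" "tight_twg r f (Tb f) (kb f) \<Longrightarrow> attached f (Tb f)"
        if "f \<in> clique_edges H - {e}" for f
        using step.IH that unfolding tight_twg_def by blast+
    qed (use step.hyps(4) step.prems in auto)
    then show ?case
      by (rule root_decomposition.glued_attached)
  qed
  then show ?thesis
    using assms(1) unfolding tight_twg_def by blast
qed

lemma tight_twg_root_decomposition: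
  assumes "tight_twg r e T k" "3 \<le> r" "k \<ge> 1"
  obtains H Tb kb where "card H = r" "root_decomposition e H Tb"
    "T = (\<Union>g\<in>clique_edges H - {e}. Tb g)" "k = 1 + sum kb (clique_edges H - {e})"
    "\<forall>g\<in>clique_edges H - {e}. tight_twg r g (Tb g) (kb g)"
  using assms(1) unfolding tight_twg_def
proof (elim conjE twg.cases)
  fix e' H Tb kb
  assume step: "e = e'" "T = (\<Union>f\<in>clique_edges H - {e'}. Tb f)" "k = 1 + sum kb (clique_edges H - {e'})"
    "finite H" "card H = r" "e' \<in> clique_edges H"
    "\<forall>f\<in>clique_edges H - {e'}. twg r f (Tb f) (kb f)"
    "\<forall>f\<in>clique_edges H - {e'}. \<forall>f'\<in>clique_edges H - {e'}. f \<noteq> f' \<longrightarrow> \<Union>(Tb f) \<inter> \<Union>(Tb f') \<subseteq> H"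
    and tight: "card (\<Union>T) = (r - 2) * k + 2"
  have branch: "twg r f (Tb f) (kb f)" if "f \<in> clique_edges H - {e}" for f
    using step that by blast
  have disjoint: "\<Union>(Tb f) \<inter> \<Union>(Tb f') \<subseteq> H"
    if "f \<in> clique_edges H - {e}" "f' \<in> clique_edges H - {e}" "f \<noteq> f'" for f f'
    using step that by blast
  have tight': "card (\<Union>(\<Union>f\<in>clique_edges H - {e}. Tb f)) = (r - 2) * (1 + sum kb (clique_edges H - {e})) + 2"
    using tight step by simp
  have "root_decomposition e H Tb"
    using tight_step_root_decomposition[OF assms(2) step(4,5) _ branch _ disjoint tight'] step(1,6)
      tight_twg_attached assms(2) by blast
  moreover have "tight_twg r g (Tb g) (kb g)" if "g \<in> clique_edges H - {e}" for g
    using tight_twg_branches[OF assms(2) step(4,5) _ branch disjoint tight' that] step(1,6) by blast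
  ultimately show thesis
    using that step by blast
qed (use assms(3) in simp)

definition separable :: "'a set set \<Rightarrow> 'a set \<Rightarrow> 'a \<Rightarrow> bool" where
  "separable T e x \<longleftrightarrow> (\<exists>P. card P = 2 \<and> x \<notin> P \<and> (\<exists>z\<in>e - P. \<not> reach T P x z))"

context root_decomposition
begin

lemma private_vertices_disjoint:
  assumes "g \<in> primal_edges" "g' \<in> primal_edges" "g \<noteq> g'"
  shows "(\<Union>(Tb g) - H) \<inter> (\<Union>(Tb g') - H) = {}"
  using branches_disjoint[OF assms] by blast

text \<open>A 2-set P cutting x off from z must meet the branch of {x, z} and, for each of the at
  least two further root vertices y, the branches of {x, y} or {y, z} or y itself; these regions
  are disjoint, so P is too small.  This is where r \<ge> 5 is needed.\<close>

lemma root_vertex_reach: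
  assumes "5 \<le> card H"
    and x: "x \<in> H" "x \<notin> e" and P: "card P = 2" "x \<notin> P" and z: "z \<in> e" "z \<notin> P"
  shows "reach glued P x z"
proof -
  define C where "C g = \<Union>(Tb g) - H" for g
  have C_disjoint: "C g \<inter> C g' = {}" if "g \<in> primal_edges" "g' \<in> primal_edges" "g \<noteq> g'" for g g'
    using private_vertices_disjoint[OF that] unfolding C_def .
  have C_root: "v \<notin> C g" if "v \<in> H" for v g
    using that unfolding C_def by blast
  have zH: "z \<in> H" "x \<noteq> z"
    using z x root_edge_subset by auto
  have edge: "{v, w} \<in> primal_edges" if "v \<in> H" "w \<in> H" "v \<noteq> w" "v \<notin> e" for v w
    using that doubleton_in_clique_edges[OF that(1-3)] by auto
  have xz: "{x, z} \<in> primal_edges"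
    using edge[OF x(1) zH x(2)] .
  show ?thesis
  proof (cases "C {x, z} \<inter> P = {}")
    case True
    then show ?thesis
      using reach_along_branch[OF xz P(2) z(2)] unfolding C_def by blast
  next
    case False
    then obtain p0 where p0: "p0 \<in> C {x, z}" "p0 \<in> P"
      by blast
    define Y where "Y = H - e - {x}"
    define R where "R y = {y} \<union> C {x, y} \<union> C {y, z}" for y
    have Y: "y \<in> H" "y \<notin> e" "y \<noteq> x" "y \<noteq> z" if "y \<in> Y" for y
      using that z unfolding Y_def by auto
    have "finite e" "finite P"
      using card_root_edge P(1) by (auto intro: card_ge_0_finite)
    then have "card (H - e) = card H - 2"
      using card_Diff_subset[OF _ root_edge_subset] card_root_edge by simp
    then have "card Y = card H - 3"
      using finite_root x unfolding Y_def by (simp add: card_Diff_singleton_if)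
    moreover have "card (P - {p0}) = 1"
      using P(1) p0(2) by (simp add: card_Diff_singleton_if)
    ultimately have "card (P - {p0}) < card Y"
      using assms(1) by simp
    moreover have "R y \<inter> R y' = {}" if "y \<in> Y" "y' \<in> Y" "y \<noteq> y'" for y y'
    proof -
      have "{x, y} \<in> primal_edges" "{y, z} \<in> primal_edges" "{x, y'} \<in> primal_edges" "{y', z} \<in> primal_edges"
        using edge[of x y] edge[of y z] edge[of x y'] edge[of y' z] x zH Y[OF that(1)] Y[OF that(2)]
        by auto
      moreover have "{x, y} \<noteq> {x, y'}" "{x, y} \<noteq> {y', z}" "{y, z} \<noteq> {x, y'}" "{y, z} \<noteq> {y', z}"
        using that(3) Y[OF that(1)] Y[OF that(2)] zH by (auto simp: doubleton_eq_iff)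
      ultimately have "C {x, y} \<inter> C {x, y'} = {}" "C {x, y} \<inter> C {y', z} = {}"
        "C {y, z} \<inter> C {x, y'} = {}" "C {y, z} \<inter> C {y', z} = {}"
        using C_disjoint by simp_all
      moreover have "y \<notin> C g" "y' \<notin> C g" for g
        using C_root Y[OF that(1)] Y[OF that(2)] by simp_all
      ultimately show ?thesis
        using that(3) unfolding R_def by blast
    qed
    ultimately obtain y where y: "y \<in> Y" "R y \<inter> (P - {p0}) = {}"
      using disjoint_family_avoids[of "P - {p0}" Y R] \<open>finite P\<close> by blast
    have xy: "{x, y} \<in> primal_edges" and yz: "{y, z} \<in> primal_edges"
      using edge[of x y] edge[of y z] x zH Y[OF y(1)] by auto
    have "{x, y} \<noteq> {x, z}" "{y, z} \<noteq> {x, z}"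
      using Y[OF y(1)] zH by (auto simp: doubleton_eq_iff)
    then have "C {x, y} \<inter> C {x, z} = {}" "C {y, z} \<inter> C {x, z} = {}"
      using C_disjoint[OF xy xz] C_disjoint[OF yz xz] by simp_all
    moreover have "p0 \<noteq> y"
      using p0(1) C_root[of y "{x, z}"] Y[OF y(1)] by blast
    ultimately have "p0 \<notin> R y"
      using p0(1) unfolding R_def by blast
    then have "R y \<inter> P = {}"
      using y(2) by blast
    then have "y \<notin> P" "(\<Union>(Tb {x, y}) - H) \<inter> P = {}" "(\<Union>(Tb {y, z}) - H) \<inter> P = {}"
      unfolding R_def C_def by blast+
    then have "reach glued P x y" "reach glued P y z"
      using reach_along_branch[OF xy P(2)] reach_along_branch[OF yz _ z(2)] by simp_all
    then show ?thesis
      by (rule reach_trans)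
  qed
qed

end

context root_decomposition
begin

lemma private_vertex_separable:
  assumes x: "x \<in> \<Union>glued" "x \<notin> H"
  shows "separable glued e x"
proof -
  obtain g where g: "g \<in> primal_edges" "x \<in> \<Union>(Tb g)"
    using x(1) by blast
  then have x_private: "x \<in> \<Union>(Tb g) - H"
    using x(2) by blast
  have "\<not> e \<subseteq> g"
    using card_2_subset_eq[OF card_root_edge card_primal_edge[OF g(1)]] g(1) by blast
  then obtain z where z: "z \<in> e" "z \<notin> g"
    by blast
  have "\<not> reach glued g x z"
  proof
    assume "reach glued g x z"
    then have "z \<notin> H"
      using reach_stays_private[OF _ g(1) order_refl x_private] by blast
    then show False
      using z(1) root_edge_subset by blast
  qed
  moreover have "x \<notin> g"
    using x_private primal_edge_subset[OF g(1)] by blast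
  ultimately show ?thesis
    unfolding separable_def using card_primal_edge[OF g(1)] z by blast
qed

lemma root_eq_unseparable:
  assumes "5 \<le> card H"
  shows "H = e \<union> {x \<in> \<Union>glued. x \<notin> e \<and> \<not> separable glued e x}"
proof
  have "\<not> separable glued e x" if "x \<in> H" "x \<notin> e" for x
    using root_vertex_reach[OF assms that] unfolding separable_def by blast
  then show "H \<subseteq> e \<union> {x \<in> \<Union>glued. x \<notin> e \<and> \<not> separable glued e x}"
    using root_subset_glued by blast
  show "e \<union> {x \<in> \<Union>glued. x \<notin> e \<and> \<not> separable glued e x} \<subseteq> H"
    using root_edge_subset private_vertex_separable by blast
qed

lemma branch_eq:
  assumes g: "g \<in> primal_edges"
  shows "Tb g = {h \<in> glued. h \<subseteq> \<Union>(Tb g)}"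
proof
  show "Tb g \<subseteq> {h \<in> glued. h \<subseteq> \<Union>(Tb g)}"
    using g by blast
  show "{h \<in> glued. h \<subseteq> \<Union>(Tb g)} \<subseteq> Tb g"
  proof
    fix h assume "h \<in> {h \<in> glued. h \<subseteq> \<Union>(Tb g)}"
    then obtain g' where g': "g' \<in> primal_edges" "h \<in> Tb g'" "h \<subseteq> \<Union>(Tb g)"
      by blast
    show "h \<in> Tb g"
    proof (cases "g' = g")
      case True
      with g' show ?thesis by simp
    next
      case False
      have "h \<subseteq> \<Union>(Tb g')"
        using g'(2) by blast
      then have "h \<subseteq> H"
        using branches_disjoint[OF g'(1) g False] g'(3) by blast
      then have "h \<subseteq> g'" "h \<subseteq> g"
        using \<open>h \<subseteq> \<Union>(Tb g')\<close> g'(3) branch_meets_root[OF g'(1)] branch_meets_root[OF g] by blast+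
      then have "h = g'" "h = g"
        using card_2_subset_eq branch_edges[OF g'(1,2)] card_primal_edge g'(1) g by blast+
      with False show ?thesis
        by simp
    qed
  qed
qed

end

lemma branch_vertices_subset:
  assumes D: "root_decomposition e H Tb" and D': "root_decomposition e H Tb'"
    and glued: "(\<Union>g\<in>clique_edges H - {e}. Tb g) = (\<Union>g\<in>clique_edges H - {e}. Tb' g)"
    and g: "g \<in> clique_edges H - {e}"
  shows "\<Union>(Tb g) \<subseteq> \<Union>(Tb' g)"
proof
  interpret D: root_decomposition e H Tb by (rule D)
  interpret D': root_decomposition e H Tb' by (rule D')
  fix x assume x: "x \<in> \<Union>(Tb g)"
  show "x \<in> \<Union>(Tb' g)"
  proof (cases "x \<in> H")
    case True
    then show ?thesis
      using x D.branch_meets_root[OF g] D'.primal_edge_subset_branch[OF g] by blast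
  next
    case False
    then obtain h where h: "h \<in> clique_edges H - {e}" "x \<in> \<Union>(Tb' h) - H"
      using x g glued by blast
    have "z \<in> h" if z: "z \<in> g" for z
    proof -
      obtain y where y: "reach (Tb g) g x y" "{y, z} \<in> Tb g"
        using D.branch_attached[OF g] x False z D.primal_edge_subset[OF g]
        unfolding attached_def by blast
      have "reach D'.glued H x y"
      proof (rule reach_mono[OF y(1)])
        show "Tb g \<subseteq> D'.glued"
          using g glued by blast
        show "v \<notin> H" if "v \<in> \<Union>(Tb g)" "v \<notin> g" for v
          using that D.branch_meets_root[OF g] by blast
      qed
      then have "y \<in> \<Union>(Tb' h) - H"
        using D'.reach_stays_private[OF _ h(1) D'.primal_edge_subset[OF h(1)] h(2)] by blast
      moreover have "{y, z} \<in> D'.glued"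
        using y(2) g glued by blast
      ultimately have "{y, z} \<in> Tb' h"
        using D'.edge_at_private_vertex[OF _ h(1)] by blast
      then have "z \<in> \<Union>(Tb' h)"
        by blast
      moreover have "z \<in> H"
        using z D.primal_edge_subset[OF g] by blast
      ultimately show "z \<in> h"
        using D'.branch_meets_root[OF h(1)] by blast
    qed
    then have "g = h"
      using card_2_subset_eq[OF D.card_primal_edge[OF g] D'.card_primal_edge[OF h(1)]] by blast
    then show ?thesis
      using h(2) by blast
  qed
qed

lemma root_decomposition_unique:
  assumes D: "root_decomposition e H Tb" and D': "root_decomposition e H' Tb'"
    and card: "5 \<le> card H" "5 \<le> card H'"
    and glued: "(\<Union>g\<in>clique_edges H - {e}. Tb g) = (\<Union>g\<in>clique_edges H' - {e}. Tb' g)"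
  shows "H = H'" "\<And>g. g \<in> clique_edges H - {e} \<Longrightarrow> Tb g = Tb' g"
proof -
  show "H = H'"
    using root_decomposition.root_eq_unseparable[OF D card(1)]
      root_decomposition.root_eq_unseparable[OF D' card(2)] glued by simp
  then have D'': "root_decomposition e H Tb'"
    and glued': "(\<Union>g\<in>clique_edges H - {e}. Tb g) = (\<Union>g\<in>clique_edges H - {e}. Tb' g)"
    using D' glued by simp_all
  fix g assume g: "g \<in> clique_edges H - {e}"
  have "\<Union>(Tb g) = \<Union>(Tb' g)"
    using branch_vertices_subset[OF D D'' glued' g] branch_vertices_subset[OF D'' D glued'[symmetric] g]
    by blast
  then show "Tb g = Tb' g"
    using root_decomposition.branch_eq[OF D g] root_decomposition.branch_eq[OF D'' g] glued' by simp
qed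

text \<open>A family assigns to each edge g of I a tight TWG for g; the vertices these TWGs add to their
  edges partition W.  Outside I the family is {}, so that it is determined by its values on I.\<close>

definition branch_families :: "nat \<Rightarrow> 'a set set \<Rightarrow> 'a set \<Rightarrow> ('a set \<Rightarrow> 'a set set) set" where
  "branch_families r I W = {Tb. (\<forall>g. g \<notin> I \<longrightarrow> Tb g = {}) \<and>
     (\<forall>g\<in>I. (\<exists>j. tight_twg r g (Tb g) j) \<and> \<Union>(Tb g) \<subseteq> g \<union> W) \<and>
     (\<forall>g\<in>I. \<forall>g'\<in>I. g \<noteq> g' \<longrightarrow> (\<Union>(Tb g) - g) \<inter> (\<Union>(Tb g') - g') = {}) \<and>
     (\<Union>g\<in>I. \<Union>(Tb g) - g) = W}"

lemma branch_familiesI: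
  assumes "\<And>g. g \<notin> I \<Longrightarrow> Tb g = {}"
    and "\<And>g. g \<in> I \<Longrightarrow> \<exists>j. tight_twg r g (Tb g) j"
    and "\<And>g. g \<in> I \<Longrightarrow> \<Union>(Tb g) \<subseteq> g \<union> W"
    and "\<And>g g'. g \<in> I \<Longrightarrow> g' \<in> I \<Longrightarrow> g \<noteq> g' \<Longrightarrow> (\<Union>(Tb g) - g) \<inter> (\<Union>(Tb g') - g') = {}"
    and "(\<Union>g\<in>I. \<Union>(Tb g) - g) = W"
  shows "Tb \<in> branch_families r I W"
  using assms unfolding branch_families_def by simp

lemma branch_familiesD:
  assumes "Tb \<in> branch_families r I W"
  shows "\<And>g. g \<notin> I \<Longrightarrow> Tb g = {}"
    and "\<And>g. g \<in> I \<Longrightarrow> \<exists>j. tight_twg r g (Tb g) j"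
    and "\<And>g. g \<in> I \<Longrightarrow> \<Union>(Tb g) \<subseteq> g \<union> W"
    and "\<And>g g'. g \<in> I \<Longrightarrow> g' \<in> I \<Longrightarrow> g \<noteq> g' \<Longrightarrow> (\<Union>(Tb g) - g) \<inter> (\<Union>(Tb g') - g') = {}"
    and "(\<Union>g\<in>I. \<Union>(Tb g) - g) = W"
  using assms unfolding branch_families_def by simp_all

lemma branch_families_empty: "branch_families r {} W = (if W = {} then {\<lambda>_. {}} else {})"
proof (cases "W = {}")
  case True
  have "(\<lambda>_. {}) \<in> branch_families r {} {}"
    by (rule branch_familiesI) auto
  moreover have "Tb = (\<lambda>_. {})" if "Tb \<in> branch_families r {} W" for Tb
    using branch_familiesD(1)[OF that] by auto
  ultimately show ?thesis
    using True by auto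
next
  case False
  have "Tb \<notin> branch_families r {} W" for Tb
    using branch_familiesD(5)[of Tb r "{}" W] False by auto
  with False show ?thesis
    by auto
qed

lemma branch_families_insert_split:
  assumes f: "f \<notin> I" and Tb: "Tb \<in> branch_families r (insert f I) W"
  obtains j where "tight_twg r f (Tb f) j" "\<Union>(Tb f) - f \<subseteq> W"
    "Tb(f := {}) \<in> branch_families r I (W - (\<Union>(Tb f) - f))"
proof -
  note F = branch_familiesD[OF Tb]
  obtain j where j: "tight_twg r f (Tb f) j"
    using F(2) by blast
  define S where "S = \<Union>(Tb f) - f"
  have same: "(Tb(f := {})) g = Tb g" if "g \<in> I" for g
    using that f by auto
  have disjoint_S: "S \<inter> (\<Union>(Tb g) - g) = {}" if "g \<in> I" for g
    using F(4)[of f g] that f unfolding S_def by auto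
  have "S \<subseteq> W"
    using F(3)[of f] unfolding S_def by blast
  moreover have "Tb(f := {}) \<in> branch_families r I (W - S)"
  proof (rule branch_familiesI)
    fix g assume g: "g \<in> I"
    show "\<exists>j. tight_twg r g ((Tb(f := {})) g) j"
      using F(2)[of g] g same by simp
    show "\<Union>((Tb(f := {})) g) \<subseteq> g \<union> (W - S)"
      unfolding same[OF g] using F(3)[of g] g disjoint_S[OF g] by blast
  next
    fix g g' assume g: "g \<in> I" "g' \<in> I" "g \<noteq> g'"
    show "(\<Union>((Tb(f := {})) g) - g) \<inter> (\<Union>((Tb(f := {})) g') - g') = {}"
      unfolding same[OF g(1)] same[OF g(2)] using F(4)[of g g'] g by blast
  next
    have "S \<union> (\<Union>g\<in>I. \<Union>(Tb g) - g) = W"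
      using F(5) unfolding S_def by simp
    moreover have "S \<inter> (\<Union>g\<in>I. \<Union>(Tb g) - g) = {}"
      by (simp add: Int_UN_distrib disjoint_S)
    ultimately have "W - S = (\<Union>g\<in>I. \<Union>(Tb g) - g)"
      by blast
    also have "\<dots> = (\<Union>g\<in>I. \<Union>((Tb(f := {})) g) - g)"
      using same by (intro SUP_cong) simp_all
    finally show "(\<Union>g\<in>I. \<Union>((Tb(f := {})) g) - g) = W - S"
      by (rule sym)
  qed (use F(1) in auto)
  ultimately show thesis
    using that j unfolding S_def by blast
qed

lemma branch_families_insert_join:
  assumes f: "f \<notin> I" "f \<inter> W = {}"
    and S: "S \<subseteq> W" and T: "tight_twg r f T j" "\<Union>T = f \<union> S"
    and Tb: "Tb \<in> branch_families r I (W - S)"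
  shows "Tb(f := T) \<in> branch_families r (insert f I) W"
proof -
  note F = branch_familiesD[OF Tb]
  let ?Tb = "Tb(f := T)"
  let ?N = "\<lambda>g. \<Union>(?Tb g) - g"
  have same: "?Tb g = Tb g" if "g \<in> I" for g
    using that f(1) by auto
  have N_f: "?N f = S"
    using T(2) f(2) S by auto
  have N_I: "?N g \<subseteq> W - S" if "g \<in> I" for g
    using F(5) same[OF that] that by blast
  show ?thesis
  proof (rule branch_familiesI)
    fix g assume g: "g \<in> insert f I"
    show "\<exists>j. tight_twg r g (?Tb g) j"
    proof (cases "g = f")
      case False
      then have "g \<in> I"
        using g by blast
      then show ?thesis
        using F(2) same by simp
    qed (use T(1) in auto)
    show "\<Union>(?Tb g) \<subseteq> g \<union> W"
    proof (cases "g = f")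
      case False
      then have "g \<in> I"
        using g by blast
      then show ?thesis
        using F(3) same by auto
    qed (use T(2) S in auto)
  next
    fix g g' assume g: "g \<in> insert f I" "g' \<in> insert f I" "g \<noteq> g'"
    show "?N g \<inter> ?N g' = {}"
    proof (cases "g = f")
      case True
      then have "g' \<in> I"
        using g by blast
      then show ?thesis
        using N_f N_I[of g'] True by blast
    next
      case False
      then have "g \<in> I"
        using g by blast
      show ?thesis
      proof (cases "g' = f")
        case True
        then show ?thesis
          using N_f N_I[OF \<open>g \<in> I\<close>] by blast
      next
        case False
        then have "g' \<in> I"
          using g by blast
        then show ?thesis
          using F(4)[OF \<open>g \<in> I\<close> _ g(3)] same[OF \<open>g \<in> I\<close>] same[of g'] by simp
      qed
    qed
  next
    have "(\<Union>g\<in>I. ?N g) = (\<Union>g\<in>I. \<Union>(Tb g) - g)"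
      using same by (intro SUP_cong) simp_all
    then have "(\<Union>g\<in>insert f I. ?N g) = S \<union> (W - S)"
      using N_f F(5) by simp
    then show "(\<Union>g\<in>insert f I. ?N g) = W"
      using S by blast
  qed (use F(1) f(1) in auto)
qed

lemma branch_families_insert:
  assumes f: "f \<notin> I" "card f = 2" "f \<inter> W = {}" and r: "3 \<le> r"
    and W: "finite W" "card W = (r - 2) * n"
  shows "branch_families r (insert f I) W =
    (\<Union>(j, S) \<in> Sigma {..n} (\<lambda>j. {S. S \<subseteq> W \<and> card S = (r - 2) * j}).
       (\<lambda>(T, Tb). Tb(f := T)) ` ({T. tight_twg r f T j \<and> \<Union>T = f \<union> S} \<times> branch_families r I (W - S)))"
    (is "?lhs = ?rhs")
proof
  show "?lhs \<subseteq> ?rhs"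
  proof
    fix Tb assume Tb: "Tb \<in> ?lhs"
    obtain j where j: "tight_twg r f (Tb f) j" "\<Union>(Tb f) - f \<subseteq> W"
      and rest: "Tb(f := {}) \<in> branch_families r I (W - (\<Union>(Tb f) - f))"
      by (rule branch_families_insert_split[OF f(1) Tb])
    define S where "S = \<Union>(Tb f) - f"
    have tw: "twg r f (Tb f) j" "card (\<Union>(Tb f)) = (r - 2) * j + 2"
      using j(1) unfolding tight_twg_def by blast+
    have "f \<subseteq> \<Union>(Tb f)" "finite f"
      using twg_edge_subset[OF tw(1) r] f(2) by (auto intro: card_ge_0_finite)
    then have card_S: "card S = (r - 2) * j" and union: "\<Union>(Tb f) = f \<union> S"
      using tw(2) f(2) unfolding S_def by (auto simp: card_Diff_subset)
    have "(r - 2) * j \<le> (r - 2) * n"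
      using card_mono[OF W(1) j(2)] card_S W(2) unfolding S_def by simp
    then have "j \<le> n"
      using r by simp
    then have "(j, S) \<in> Sigma {..n} (\<lambda>j. {S. S \<subseteq> W \<and> card S = (r - 2) * j})"
      using j(2) card_S unfolding S_def by simp
    moreover have "(Tb f, Tb(f := {})) \<in> {T. tight_twg r f T j \<and> \<Union>T = f \<union> S} \<times> branch_families r I (W - S)"
      using j(1) union rest unfolding S_def by simp
    moreover have "Tb = (\<lambda>(T, Tb). Tb(f := T)) (Tb f, Tb(f := {}))"
      by simp
    ultimately show "Tb \<in> ?rhs"
      by blast
  qed
  show "?rhs \<subseteq> ?lhs"
  proof
    fix Tb assume "Tb \<in> ?rhs"
    then obtain j S T Tb' where "S \<subseteq> W" "tight_twg r f T j" "\<Union>T = f \<union> S"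
      "Tb' \<in> branch_families r I (W - S)" "Tb = Tb'(f := T)"
      by auto
    then show "Tb \<in> ?lhs"
      using branch_families_insert_join[OF f(1,3)] by blast
  qed
qed

lemma card_branch_families:
  fixes I :: "'a set set"
  assumes "finite I" "3 \<le> r"
    and "\<And>j (f :: 'a set) U. j \<le> n \<Longrightarrow> card f = 2 \<Longrightarrow> f \<subseteq> U \<Longrightarrow> finite U \<Longrightarrow> card U = (r - 2) * j + 2
      \<Longrightarrow> card {T. twg r f T j \<and> \<Union>T = U} * fact (r - 2) ^ j = fact ((r - 2) * j) * raney m 1 j"
    and "\<And>g. g \<in> I \<Longrightarrow> card g = 2 \<and> g \<inter> W = {}" "finite W" "card W = (r - 2) * n"
  shows "finite (branch_families r I W) \<and>
    card (branch_families r I W) * fact (r - 2) ^ n = fact ((r - 2) * n) * raney m (card I) n"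
  using assms(1,3-)
proof (induction I arbitrary: W n rule: finite_induct)
  case empty
  show ?case
  proof (cases "W = {}")
    case True
    then have "n = 0"
      using empty.prems(4) assms(2) by simp
    then show ?thesis
      using True by (simp add: branch_families_empty)
  next
    case False
    then have "card W \<noteq> 0"
      using empty.prems(3) by simp
    then have "n \<noteq> 0"
      using empty.prems(4) by auto
    then show ?thesis
      using False by (simp add: branch_families_empty)
  qed
next
  case (insert f I)
  let ?s = "r - 2"
  define B where "B j = {S. S \<subseteq> W \<and> card S = ?s * j}" for j
  define A where "A j S = {T. tight_twg r f T j \<and> \<Union>T = f \<union> S}" for j S
  define piece where "piece = (\<lambda>(j, S). (\<lambda>(T, Tb). Tb(f := T)) ` (A j S \<times> branch_families r I (W - S)))"
  have f: "card f = 2" "f \<inter> W = {}"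
    using insert.prems(2)[of f] by simp_all
  then have "finite f"
    by (intro card_ge_0_finite) simp
  have split: "branch_families r (insert f I) W = (\<Union>p\<in>Sigma {..n} B. piece p)"
    unfolding B_def A_def piece_def
    using branch_families_insert[OF insert.hyps(2) f(1,2) assms(2) insert.prems(3,4)] by simp
  have finite_index: "finite (Sigma {..n} B)"
    unfolding B_def using insert.prems(3) by (intro finite_SigmaI) auto
  have card_piece: "finite (piece (j, S)) \<and> card (piece (j, S)) * fact ?s ^ n
      = fact (?s * j) * raney m 1 j * (fact (?s * (n - j)) * raney m (card I) (n - j))"
    if "(j, S) \<in> Sigma {..n} B" for j S
  proof -
    have jS: "j \<le> n" "S \<subseteq> W" "card S = ?s * j"
      using that unfolding B_def by auto
    have "finite S"
      using jS(2) insert.prems(3) by (rule finite_subset)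
    moreover have "f \<inter> S = {}"
      using f(2) jS(2) by blast
    ultimately have card_fS: "card (f \<union> S) = ?s * j + 2"
      using card_Un_disjoint[OF \<open>finite f\<close>] f(1) jS(3) by simp
    have "A j S \<subseteq> Pow (Pow (f \<union> S))"
      unfolding A_def by blast
    then have "finite (A j S)"
      by (rule finite_subset) (use \<open>finite f\<close> \<open>finite S\<close> in simp)
    moreover have "A j S = {T. twg r f T j \<and> \<Union>T = f \<union> S}"
      using card_fS unfolding A_def tight_twg_def by auto
    then have "card (A j S) * fact ?s ^ j = fact (?s * j) * raney m 1 j"
      using insert.prems(1)[of j f "f \<union> S"] jS(1) f(1) \<open>finite f\<close> \<open>finite S\<close> card_fS by simp
    ultimately have A: "finite (A j S)" "card (A j S) * fact ?s ^ j = fact (?s * j) * raney m 1 j"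
      by blast+
    have card_WS: "card (W - S) = ?s * (n - j)"
      using card_Diff_subset[OF \<open>finite S\<close> jS(2)] insert.prems(4) jS(3) by (simp add: diff_mult_distrib2)
    have "finite (branch_families r I (W - S)) \<and>
      card (branch_families r I (W - S)) * fact ?s ^ (n - j) = fact (?s * (n - j)) * raney m (card I) (n - j)"
    proof (rule insert.IH)
      fix j' and f' U :: "'a set"
      assume "j' \<le> n - j" "card f' = 2" "f' \<subseteq> U" "finite U" "card U = ?s * j' + 2"
      then show "card {T. twg r f' T j' \<and> \<Union>T = U} * fact ?s ^ j' = fact (?s * j') * raney m 1 j'"
        using insert.prems(1) by simp
    next
      show "card g = 2 \<and> g \<inter> (W - S) = {}" if "g \<in> I" for g
        using insert.prems(2)[of g] that by auto
    qed (use insert.prems(3) card_WS in simp_all)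
    then have F: "finite (branch_families r I (W - S))"
      "card (branch_families r I (W - S)) * fact ?s ^ (n - j) = fact (?s * (n - j)) * raney m (card I) (n - j)"
      by blast+
    have card: "card (piece (j, S)) = card (A j S) * card (branch_families r I (W - S))"
      unfolding piece_def
      by (simp add: card_fun_upd_image[OF A(1) F(1) branch_familiesD(1)] insert.hyps(2))
    have "fact ?s ^ n = (fact ?s ^ j :: nat) * fact ?s ^ (n - j)"
      using jS(1) by (simp flip: power_add)
    then show ?thesis
      using A F card unfolding piece_def by (simp add: ac_simps)
  qed
  have private_f: "\<Union>(Tb f) - f = S" if "Tb \<in> piece (j, S)" "(j, S) \<in> Sigma {..n} B" for Tb j S
    using that f(2) unfolding piece_def A_def B_def by auto
  have disjoint: "piece p \<inter> piece q = {}" if "p \<in> Sigma {..n} B" "q \<in> Sigma {..n} B" "p \<noteq> q" for p q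
  proof (rule ccontr)
    obtain j S j' S' where pq: "p = (j, S)" "q = (j', S')"
      by fastforce
    assume "piece p \<inter> piece q \<noteq> {}"
    then have "S = S'"
      using private_f that pq by blast
    moreover have "card S = ?s * j" "card S' = ?s * j'"
      using that pq unfolding B_def by auto
    ultimately have "j = j'"
      using assms(2) by simp
    with \<open>S = S'\<close> that(3) pq show False
      by simp
  qed
  have "card (branch_families r (insert f I) W) = (\<Sum>p\<in>Sigma {..n} B. card (piece p))"
    unfolding split using finite_index card_piece disjoint by (intro card_UN_disjoint) auto
  then have "card (branch_families r (insert f I) W) * fact ?s ^ n
      = (\<Sum>p\<in>Sigma {..n} B. card (piece p) * fact ?s ^ n)"
    by (simp add: sum_distrib_right)
  also have "\<dots> = (\<Sum>(j, S)\<in>Sigma {..n} B.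
      fact (?s * j) * raney m 1 j * (fact (?s * (n - j)) * raney m (card I) (n - j)))"
    using card_piece by (intro sum.cong) auto
  also have "\<dots> = (\<Sum>j\<le>n. \<Sum>S\<in>B j. fact (?s * j) * raney m 1 j * (fact (?s * (n - j)) * raney m (card I) (n - j)))"
    using insert.prems(3) by (subst sum.Sigma) (auto simp: B_def)
  also have "\<dots> = (\<Sum>j\<le>n. fact (?s * n) * (raney m 1 j * raney m (card I) (n - j)))"
  proof (rule sum.cong)
    fix j assume "j \<in> {..n}"
    then have "card (B j) * fact (?s * j) * fact (?s * (n - j)) = fact (?s * n)"
      unfolding B_def using card_subsets_times_fact insert.prems(3,4) by simp
    then show "(\<Sum>S\<in>B j. fact (?s * j) * raney m 1 j * (fact (?s * (n - j)) * raney m (card I) (n - j)))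
        = fact (?s * n) * (raney m 1 j * raney m (card I) (n - j))"
      by (simp add: ac_simps)
  qed simp
  also have "\<dots> = fact (?s * n) * raney m (card (insert f I)) n"
    using raney_add[of m 1 "card I" n] insert.hyps by (simp add: sum_distrib_left)
  finally show ?case
    using split finite_index card_piece by auto
qed

lemma branch_family_glue:
  assumes r: "3 \<le> r" and H: "finite H" "card H = r" "e \<in> clique_edges H" "H \<subseteq> V"
    and V: "finite V" "card V = (r - 2) * k + 2"
    and Tb: "Tb \<in> branch_families r (clique_edges H - {e}) (V - H)"
  shows "root_decomposition e H Tb" "twg r e (\<Union>g\<in>clique_edges H - {e}. Tb g) k"
    "\<Union>(\<Union>g\<in>clique_edges H - {e}. Tb g) = V"
proof -
  let ?I = "clique_edges H - {e}"
  note F = branch_familiesD[OF Tb]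
  obtain kb where kb: "\<And>g. g \<in> ?I \<Longrightarrow> tight_twg r g (Tb g) (kb g)"
    using F(2) by metis
  have branch: "twg r g (Tb g) (kb g)" "card (\<Union>(Tb g)) = (r - 2) * kb g + 2" if "g \<in> ?I" for g
    using kb[OF that] unfolding tight_twg_def by blast+
  have edge: "g \<subseteq> \<Union>(Tb g)" "g \<subseteq> H" "card g = 2" if "g \<in> ?I" for g
    using twg_edge_subset[OF branch(1)[OF that] r] that by (auto simp: clique_edges_iff)
  have meets_root: "\<Union>(Tb g) \<inter> H = g" if "g \<in> ?I" for g
    using F(3)[OF that] edge[OF that] by blast
  have disjoint: "\<Union>(Tb g) \<inter> \<Union>(Tb g') \<subseteq> H" if "g \<in> ?I" "g' \<in> ?I" "g \<noteq> g'" for g g'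
    using F(4)[OF that] edge(2)[OF that(1)] edge(2)[OF that(2)] by blast
  show "root_decomposition e H Tb"
  proof
    fix g assume g: "g \<in> ?I"
    show "\<Union>(Tb g) \<inter> H = g"
      by (rule meets_root[OF g])
    show "card h = 2" if "h \<in> Tb g" for h
      using twg_edges[OF branch(1)[OF g]] that by blast
    show "attached g (Tb g)"
      by (rule tight_twg_attached[OF kb[OF g] r])
    show "\<Union>(Tb g) = g \<Longrightarrow> Tb g = {g}"
      by (rule tight_twg_trivial[OF kb[OF g] r])
  qed (use H r disjoint in auto)
  have new: "card (\<Union>(Tb g) - g) = (r - 2) * kb g" if "g \<in> ?I" for g
    using branch(2)[OF that] edge[OF that] card_Diff_subset[of g "\<Union>(Tb g)"]
    by (simp add: card_ge_0_finite)
  have "card (V - H) = (\<Sum>g\<in>?I. card (\<Union>(Tb g) - g))"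
    unfolding F(5)[symmetric]
  proof (rule card_UN_disjoint)
    show "finite ?I"
      using H(1) by (simp add: finite_clique_edges)
    show "\<forall>g\<in>?I. finite (\<Union>(Tb g) - g)"
      using twg_finite_vertices[OF branch(1)] by blast
    show "\<forall>g\<in>?I. \<forall>g'\<in>?I. g \<noteq> g' \<longrightarrow> (\<Union>(Tb g) - g) \<inter> (\<Union>(Tb g') - g') = {}"
      using F(4) by blast
  qed
  also have "\<dots> = (r - 2) * sum kb ?I"
    using new by (simp add: sum_distrib_left)
  finally have sum_kb: "card (V - H) = (r - 2) * sum kb ?I" .
  have "r \<le> card V"
    using card_mono[OF V(1) H(4)] H(2) by simp
  then have "k \<ge> 1"
    using V(2) r by (cases k) auto
  then have "card V - r = (r - 2) * (k - 1)"
    using V(2) r by (cases k) (auto simp: algebra_simps)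
  moreover have "card (V - H) = card V - r"
    using card_Diff_subset[OF finite_subset[OF H(4) V(1)] H(4)] H(2) by simp
  ultimately have "sum kb ?I = k - 1"
    using sum_kb r by simp
  then have k: "k = 1 + sum kb ?I"
    using \<open>k \<ge> 1\<close> by simp
  show "twg r e (\<Union>g\<in>?I. Tb g) k"
    unfolding k using H(1-3) branch(1) disjoint by (intro twg.step) auto
  show "\<Union>(\<Union>g\<in>?I. Tb g) = V"
  proof
    show "\<Union>(\<Union>g\<in>?I. Tb g) \<subseteq> V"
    proof
      fix x assume "x \<in> \<Union>(\<Union>g\<in>?I. Tb g)"
      then obtain g where g: "g \<in> ?I" "x \<in> \<Union>(Tb g)"
        by blast
      then show "x \<in> V"
        using F(3)[OF g(1)] edge(2)[OF g(1)] H(4) by blast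
    qed
    have "H \<subseteq> \<Union>(\<Union>g\<in>?I. Tb g)"
      by (rule clique_subset_branches[OF H(1) _ H(3) edge(1)]) (use H(2) r in simp_all)
    moreover have "V - H \<subseteq> \<Union>(\<Union>g\<in>?I. Tb g)"
      using F(5) by blast
    ultimately show "V \<subseteq> \<Union>(\<Union>g\<in>?I. Tb g)"
      by blast
  qed
qed

lemma tight_twg_branch_family:
  assumes T: "tight_twg r e T k" and r: "3 \<le> r" and k: "k \<ge> 1"
  obtains H Tb where "e \<subseteq> H" "H \<subseteq> \<Union>T" "card H = r"
    "Tb \<in> branch_families r (clique_edges H - {e}) (\<Union>T - H)" "T = (\<Union>g\<in>clique_edges H - {e}. Tb g)"
proof -
  obtain H Tb kb where H: "card H = r" and D: "root_decomposition e H Tb"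
    and glued: "T = (\<Union>g\<in>clique_edges H - {e}. Tb g)"
    and "k = 1 + sum kb (clique_edges H - {e})"
    and branch: "\<forall>g\<in>clique_edges H - {e}. tight_twg r g (Tb g) (kb g)"
    by (rule tight_twg_root_decomposition[OF T r k])
  interpret root_decomposition e H Tb by (rule D)
  define Tb0 where "Tb0 g = (if g \<in> primal_edges then Tb g else {})" for g
  have Tb0: "Tb0 g = Tb g" if "g \<in> primal_edges" for g
    using that unfolding Tb0_def by simp
  have glued0: "T = (\<Union>g\<in>primal_edges. Tb0 g)"
    unfolding glued using Tb0 by (intro SUP_cong) simp_all
  have "Tb0 \<in> branch_families r primal_edges (\<Union>T - H)"
  proof (rule branch_familiesI)
    fix g assume g: "g \<in> primal_edges"
    show "\<exists>j. tight_twg r g (Tb0 g) j"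
      using branch g Tb0[OF g] by auto
    have "\<Union>(Tb g) \<subseteq> \<Union>T"
      using g glued by blast
    then show "\<Union>(Tb0 g) \<subseteq> g \<union> (\<Union>T - H)"
      unfolding Tb0[OF g] using branch_meets_root[OF g] by blast
  next
    fix g g' assume g: "g \<in> primal_edges" "g' \<in> primal_edges" "g \<noteq> g'"
    show "(\<Union>(Tb0 g) - g) \<inter> (\<Union>(Tb0 g') - g') = {}"
      unfolding Tb0[OF g(1)] Tb0[OF g(2)] private_vertices[OF g(1)] private_vertices[OF g(2)]
      by (rule private_vertices_disjoint[OF g])
  next
    have "(\<Union>g\<in>primal_edges. \<Union>(Tb0 g) - g) = (\<Union>g\<in>primal_edges. \<Union>(Tb g) - H)"
      using Tb0 private_vertices by (intro SUP_cong) simp_all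
    also have "\<dots> = \<Union>T - H"
      unfolding glued by auto
    finally show "(\<Union>g\<in>primal_edges. \<Union>(Tb0 g) - g) = \<Union>T - H" .
  qed (auto simp: Tb0_def)
  moreover have "H \<subseteq> \<Union>T"
    using root_subset_glued glued by simp
  ultimately show thesis
    using that[OF root_edge_subset _ H] glued0 by blast
qed

lemma twgs_eq_glued_families:
  assumes r: "3 \<le> r" and e: "card e = 2" "e \<subseteq> V" and V: "finite V" "card V = (r - 2) * k + 2"
    and k: "k \<ge> 1"
  shows "{T. twg r e T k \<and> \<Union>T = V} = (\<Union>H\<in>{H. e \<subseteq> H \<and> H \<subseteq> V \<and> card H = r}.
    (\<lambda>Tb. \<Union>g\<in>clique_edges H - {e}. Tb g) ` branch_families r (clique_edges H - {e}) (V - H))"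
proof (intro equalityI subsetI)
  fix T assume "T \<in> {T. twg r e T k \<and> \<Union>T = V}"
  then have T: "tight_twg r e T k" "\<Union>T = V"
    using V(2) unfolding tight_twg_def by auto
  obtain H Tb where "e \<subseteq> H" "H \<subseteq> V" "card H = r"
    "Tb \<in> branch_families r (clique_edges H - {e}) (V - H)" "T = (\<Union>g\<in>clique_edges H - {e}. Tb g)"
    using tight_twg_branch_family[OF T(1) r k] unfolding T(2) by metis
  then show "T \<in> (\<Union>H\<in>{H. e \<subseteq> H \<and> H \<subseteq> V \<and> card H = r}.
    (\<lambda>Tb. \<Union>g\<in>clique_edges H - {e}. Tb g) ` branch_families r (clique_edges H - {e}) (V - H))"
    by blast
next
  fix T assume "T \<in> (\<Union>H\<in>{H. e \<subseteq> H \<and> H \<subseteq> V \<and> card H = r}.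
    (\<lambda>Tb. \<Union>g\<in>clique_edges H - {e}. Tb g) ` branch_families r (clique_edges H - {e}) (V - H))"
  then obtain H Tb where H: "e \<subseteq> H" "H \<subseteq> V" "card H = r"
    and Tb: "Tb \<in> branch_families r (clique_edges H - {e}) (V - H)"
    and T: "T = (\<Union>g\<in>clique_edges H - {e}. Tb g)"
    by blast
  have "finite H" "e \<in> clique_edges H"
    using H e finite_subset[OF H(2) V(1)] by (auto simp: clique_edges_iff)
  then show "T \<in> {T. twg r e T k \<and> \<Union>T = V}"
    using branch_family_glue(2,3)[OF r _ H(3) _ H(2) V Tb] T by simp
qed

lemma glued_families_unique:
  assumes r: "5 \<le> r" and V: "finite V" "card V = (r - 2) * k + 2"
    and H1: "e \<subseteq> H1" "H1 \<subseteq> V" "card H1 = r" "Tb1 \<in> branch_families r (clique_edges H1 - {e}) (V - H1)"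
    and H2: "e \<subseteq> H2" "H2 \<subseteq> V" "card H2 = r" "Tb2 \<in> branch_families r (clique_edges H2 - {e}) (V - H2)"
    and e: "card e = 2"
    and glued: "(\<Union>g\<in>clique_edges H1 - {e}. Tb1 g) = (\<Union>g\<in>clique_edges H2 - {e}. Tb2 g)"
  shows "H1 = H2 \<and> Tb1 = Tb2"
proof -
  have r3: "3 \<le> r"
    using r by simp
  have "root_decomposition e H1 Tb1" "root_decomposition e H2 Tb2"
    using branch_family_glue(1)[OF r3 finite_subset[OF H1(2) V(1)] H1(3) _ H1(2) V H1(4)]
      branch_family_glue(1)[OF r3 finite_subset[OF H2(2) V(1)] H2(3) _ H2(2) V H2(4)]
      H1(1) H2(1) e by (auto simp: clique_edges_iff)
  note unique = root_decomposition_unique[OF this, unfolded H1(3) H2(3), OF r r glued]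
  have "Tb1 g = Tb2 g" for g
  proof (cases "g \<in> clique_edges H1 - {e}")
    case False
    then show ?thesis
      using branch_familiesD(1)[OF H1(4)] branch_familiesD(1)[OF H2(4)] unique(1) by simp
  qed (rule unique(2))
  then show ?thesis
    using unique(1) by blast
qed

lemma card_twgs_step:
  fixes e V :: "'a set"
  assumes r: "5 \<le> r" and e: "card e = 2" "e \<subseteq> V" and V: "finite V" "card V = (r - 2) * k + 2"
    and k: "k \<ge> 1"
    and IH: "\<And>j (f :: 'a set) U. j \<le> k - 1 \<Longrightarrow> card f = 2 \<Longrightarrow> f \<subseteq> U \<Longrightarrow> finite U
      \<Longrightarrow> card U = (r - 2) * j + 2
      \<Longrightarrow> card {T. twg r f T j \<and> \<Union>T = U} * fact (r - 2) ^ j = fact ((r - 2) * j) * raney ((r choose 2) - 1) 1 j"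
  shows "card {T. twg r e T k \<and> \<Union>T = V} * fact (r - 2) ^ k = fact ((r - 2) * k) * raney ((r choose 2) - 1) 1 k"
proof -
  let ?s = "r - 2" and ?m = "(r choose 2) - 1"
  define Hs where "Hs = {H. e \<subseteq> H \<and> H \<subseteq> V \<and> card H = r}"
  define glue where "glue H Tb = (\<Union>g\<in>clique_edges H - {e}. Tb g)" for H and Tb :: "'a set \<Rightarrow> 'a set set"
  define Fm where "Fm H = branch_families r (clique_edges H - {e}) (V - H)" for H
  have r3: "3 \<le> r"
    using r by simp
  have Hs: "finite H" "card H = r" "H \<subseteq> V" "e \<in> clique_edges H" if "H \<in> Hs" for H
    using that e finite_subset[OF _ V(1)] unfolding Hs_def by (auto simp: clique_edges_iff)
  have families: "finite (Fm H) \<and> card (Fm H) * fact ?s ^ (k - 1) = fact (?s * (k - 1)) * raney ?m ?m (k - 1)"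
    if H: "H \<in> Hs" for H
  proof -
    have "card (V - H) = ?s * (k - 1)"
      using card_Diff_subset[OF Hs(1,3)[OF H]] Hs(2)[OF H] V(2) k r3
      by (cases k) (auto simp: algebra_simps)
    then have "finite (Fm H) \<and> card (Fm H) * fact ?s ^ (k - 1)
        = fact (?s * (k - 1)) * raney ?m (card (clique_edges H - {e})) (k - 1)"
      unfolding Fm_def using Hs(1)[OF H] V(1)
      by (intro card_branch_families[OF _ r3 IH]) (auto simp: finite_clique_edges clique_edges_iff)
    moreover have "card (clique_edges H - {e}) = ?m"
      using Hs[OF H] by (simp add: card_clique_edges finite_clique_edges)
    ultimately show ?thesis
      by simp
  qed
  have unique: "H1 = H2 \<and> Tb1 = Tb2"
    if "H1 \<in> Hs" "Tb1 \<in> Fm H1" "H2 \<in> Hs" "Tb2 \<in> Fm H2" "glue H1 Tb1 = glue H2 Tb2" for H1 H2 Tb1 Tb2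
    using glued_families_unique[OF r V _ _ _ _ _ _ _ _ e(1)] that unfolding Hs_def Fm_def glue_def by blast
  have "finite Hs"
    using V(1) unfolding Hs_def by (rule rev_finite_subset[OF finite_Pow_iff[THEN iffD2]]) blast
  have "{T. twg r e T k \<and> \<Union>T = V} = (\<Union>H\<in>Hs. glue H ` Fm H)"
    unfolding Hs_def glue_def Fm_def by (rule twgs_eq_glued_families[OF r3 e V k])
  also have "card \<dots> = (\<Sum>H\<in>Hs. card (glue H ` Fm H))"
  proof (rule card_UN_disjoint)
    show "finite Hs" by fact
    show "\<forall>H\<in>Hs. finite (glue H ` Fm H)"
      using families by blast
    show "\<forall>H1\<in>Hs. \<forall>H2\<in>Hs. H1 \<noteq> H2 \<longrightarrow> glue H1 ` Fm H1 \<inter> glue H2 ` Fm H2 = {}"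
      using unique by blast
  qed
  also have "\<dots> = (\<Sum>H\<in>Hs. card (Fm H))"
  proof (rule sum.cong)
    fix H assume "H \<in> Hs"
    then have "inj_on (glue H) (Fm H)"
      using unique by (intro inj_onI) blast
    then show "card (glue H ` Fm H) = card (Fm H)"
      by (rule card_image)
  qed simp
  finally have "card {T. twg r e T k \<and> \<Union>T = V} = (\<Sum>H\<in>Hs. card (Fm H))" .
  then have "card {T. twg r e T k \<and> \<Union>T = V} * fact ?s ^ k
      = card Hs * fact ?s * (fact (?s * (k - 1)) * raney ?m ?m (k - 1))"
    using families k by (cases k) (simp_all add: sum_distrib_right ac_simps)
  also have "card Hs = (?s * k) choose ?s"
  proof -
    have "card e + ?s = r"
      using e(1) r by simp
    then show ?thesis
      using card_supersets[OF V(1) e(2), of ?s] V(2) unfolding Hs_def e(1) by simp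
  qed
  also have "((?s * k) choose ?s) * fact ?s * (fact (?s * (k - 1)) * raney ?m ?m (k - 1))
      = (fact ?s * fact (?s * k - ?s) * ((?s * k) choose ?s)) * raney ?m ?m (k - 1)"
    by (simp add: diff_mult_distrib2)
  also have "\<dots> = fact (?s * k) * raney ?m ?m (k - 1)"
    using binomial_fact_lemma[of ?s "?s * k"] k by simp
  also have "raney ?m ?m (k - 1) = raney ?m 1 k"
    using k by (cases k) simp_all
  finally show ?thesis .
qed

lemma card_twgs:
  fixes e V :: "'a set"
  assumes r: "5 \<le> r" and "card e = 2" "e \<subseteq> V" "finite V" "card V = (r - 2) * k + 2"
  shows "card {T. twg r e T k \<and> \<Union>T = V} * fact (r - 2) ^ k = fact ((r - 2) * k) * raney ((r choose 2) - 1) 1 k"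
  using assms(2-)
proof (induction k arbitrary: e V rule: less_induct)
  case (less k)
  show ?case
  proof (cases "k = 0")
    case True
    then have "e = V"
      using card_subset_eq[OF less.prems(3,2)] less.prems(1,4) by simp
    have "{T. twg r e T k \<and> \<Union>T = V} = {{e}}"
    proof (intro equalityI subsetI)
      fix T assume "T \<in> {T. twg r e T k \<and> \<Union>T = V}"
      then show "T \<in> {{e}}"
        using True twg_order_0 by blast
    next
      fix T assume "T \<in> {{e}}"
      then show "T \<in> {T. twg r e T k \<and> \<Union>T = V}"
        using True twg.base[OF less.prems(1)] \<open>e = V\<close> by simp
    qed
    then show ?thesis
      using True by simp
  next
    case False
    show ?thesis
    proof (rule card_twgs_step[OF r less.prems])
      show "k \<ge> 1"
        using False by simp
      fix j and f U :: "'a set"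
      assume "j \<le> k - 1" "card f = 2" "f \<subseteq> U" "finite U" "card U = (r - 2) * j + 2"
      then show "card {T. twg r f T j \<and> \<Union>T = U} * fact (r - 2) ^ j
          = fact ((r - 2) * j) * raney ((r choose 2) - 1) 1 j"
        using less.IH[of j f U] False by simp
    qed
  qed
qed

theorem lemma3p8:
  fixes r k :: nat and e V :: "'a set"
  assumes "r \<ge> 5"
    and "finite V" and "card V = (r - 2) * k + 2"
    and "card e = 2" and "e \<subseteq> V"
  shows "real (card {T. twg r e T k \<and> \<Union>T = V})
         = fact ((r - 2) * k) / (fact (r - 2)) ^ k * fuss_catalan ((r choose 2) - 2) k"
proof -
  have "r * (r - 1) \<ge> 5 * 4"
    using assms(1) by (intro mult_mono) auto
  then have "(r choose 2) - 1 \<ge> 1"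
    unfolding choose_two by linarith
  then have "fuss_catalan ((r choose 2) - 2) k = real (raney ((r choose 2) - 1) 1 k)"
    using raney_1_eq_fuss_catalan[of "(r choose 2) - 1" k] by (simp add: numeral_2_eq_2)
  moreover have "real (card {T. twg r e T k \<and> \<Union>T = V}) * fact (r - 2) ^ k
      = fact ((r - 2) * k) * real (raney ((r choose 2) - 1) 1 k)"
    using arg_cong[OF card_twgs[OF assms(1,4,5,2,3)], of real] by simp
  ultimately show ?thesis
    by (simp add: field_simps)
qed

end
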